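(* Let $\pi\in\mathfrak{S}_n$ avoid $231$, and let $(a,c,b)$ and $(d,f,e)$ be $3$-cycles in the disjoint cycle decomposition of $\pi$ with $a<b<c$, $d<e<f$ and $a<d$. Then one of the following holds: (1) $c<d$ (so that each of $a,b,c$ is less than each of $d,e,f$); (2) $c>f$ and $d<b<e$; (3) $c>f$ and $e<b<f$.
   Context: A permutation avoids $231$ if there are no indices $i<j<k$ with $\pi_k<\pi_i<\pi_j$. The cycle $(a,c,b)$ means $a\mapsto c\mapsto b\mapsto a$. *)

theory Defs
  imports "HOL-Combinatorics.Permutations"
begin

definition avoids_231 :: "nat \<Rightarrow> (nat \<Rightarrow> nat) \<Rightarrow> bool" where
  "avoids_231 n \<pi> \<longleftrightarrow>
     \<not> (\<exists>i j k. 1 \<le> i \<and> i < j \<and> j < k \<and> k \<le> n \<and> \<pi> k < \<pi> i \<and> \<pi> i < \<pi> j)"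

definition has_3cycle :: "(nat \<Rightarrow> nat) \<Rightarrow> nat \<Rightarrow> nat \<Rightarrow> nat \<Rightarrow> bool" where
  "has_3cycle \<pi> x y z \<longleftrightarrow> distinct [x, y, z] \<and> \<pi> x = y \<and> \<pi> y = z \<and> \<pi> z = x"

end

theory Submission
  imports Defs
begin

text \<open>Only three instances of 231-avoidance are needed. At the positions a < d < e the values are c, f, d, so c cannot lie
  strictly between d and f, i.e. c < d or c > f. The positions e < f < b would carry
  d, e, a with a < d, so b < f; and if c > f, the positions e < f < c carry d, e, b,
  which forces b > d.\<close>

lemma avoids_231D:
  assumes "avoids_231 n \<pi>" and "1 \<le> i" "i < j" "j < k" "k \<le> n" and "\<pi> k < \<pi> i"
  shows "\<pi> j \<le> \<pi> i"
  using assms unfolding avoids_231_def by (meson not_le)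

lemma has_3cycle_eqs:
  assumes "has_3cycle \<pi> x y z"
  shows "\<pi> x = y" "\<pi> y = z" "\<pi> z = x"
  using assms unfolding has_3cycle_def by auto

theorem lemma3p3:
  fixes n :: nat and \<pi> :: "nat \<Rightarrow> nat" and a b c d e f :: nat
  assumes "\<pi> permutes {1..n}"
    and "avoids_231 n \<pi>"
    and "a \<in> {1..n}" and "b \<in> {1..n}" and "c \<in> {1..n}"
    and "d \<in> {1..n}" and "e \<in> {1..n}" and "f \<in> {1..n}"
    and "has_3cycle \<pi> a c b" and "has_3cycle \<pi> d f e"
    and "a < b" and "b < c" and "d < e" and "e < f" and "a < d"
  shows "c < d \<or> (c > f \<and> d < b \<and> b < e) \<or> (c > f \<and> e < b \<and> b < f)"
proof -
  note cycle1 = has_3cycle_eqs[OF assms(9)] and cycle2 = has_3cycle_eqs[OF assms(10)]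
  note no_231 = avoids_231D[OF assms(2)]
  have disjoint: "c \<noteq> f" "c \<noteq> d" "b \<noteq> d" "b \<noteq> e" "b \<noteq> f"
    using cycle1 cycle2 assms(11-15) by (metis less_irrefl less_trans)+
  have "c < d \<or> f < c"
    using no_231[of a d e] disjoint assms(3,7,13,15)
    by (cases "d < c") (auto simp: cycle1 cycle2)
  moreover have "d < b" if "f < c"
    using no_231[of e f c] that disjoint assms(5,7,13,14)
    by (cases "b < d") (auto simp: cycle1 cycle2)
  moreover have "b < f"
    using no_231[of e f b] disjoint assms(4,7,13,14,15)
    by (cases "f < b") (auto simp: cycle1 cycle2)
  ultimately show ?thesis
    using disjoint(4) by auto
qed

end
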